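(* Consider the coordination game described in the context in which each agent $i$ observes only the signal $z_i=A-\theta+\rho_i$. Suppose $\rho_i\in[-\sigma,\sigma]$ almost surely (its density vanishes outside $[-\sigma,\sigma]$), where $0<\sigma<\tfrac12$. Then there exists a continuum (an uncountable family) of distinct equilibria $A(\cdot)$.
   Context: A unit mass of agents $i\in[0,1]$ each choose $a_i\in\{0,1\}$ ($a_i=1$: attack the status quo). The aggregate attack is $A=\int_0^1 a_i\,di$. The status quo has strength $\theta\in\mathbb{R}$ and is abandoned iff $A\ge\theta$. An attacking agent pays cost $c\in(0,1)$ and gets $1$ if the status quo is abandoned, otherwise nothing; not attacking yields $0$. Agents hold an (improper) uniform prior over $\theta$ on $\mathbb{R}$. Agent $i$ receives a single private signal $z_i=A-\theta+\rho_i$, where the errors $\rho_i$ are i.i.d. across agents with density $g$; the structure is common knowledge. Given a conjectured (measurable) aggregate attack function $A:\mathbb{R}\to[0,1]$, the posterior of an agent with signal $z$ is $P[\theta\in S\mid z,A(\cdot)]=\int_S g(z-A(\theta)+\theta)\,d\theta\big/\int_{\mathbb{R}} g(z-A(\theta)+\theta)\,d\theta$. An equilibrium is a function $A:\mathbb{R}\to[0,1]$ such that for all $\theta\in\mathbb{R}$, $A(\theta)=\int_{\mathbb{R}}\chi\{\rho: P[A(\theta')\ge\theta'\mid z=A(\theta)-\theta+\rho,\,A(\cdot)]\ge c\}\,g(\rho)\,d\rho$, where $\theta'$ is the random fundamental under the posterior and $\chi$ is the indicator function. *)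

theory Defs
  imports "HOL-Analysis.Analysis"
begin

text \<open>Posterior probability of a set S of fundamentals, given signal z, conjectured
aggregate attack function A and error density g (improper uniform prior on theta).\<close>
definition posterior ::
  "(real \<Rightarrow> real) \<Rightarrow> (real \<Rightarrow> real) \<Rightarrow> real set \<Rightarrow> real \<Rightarrow> real" where
  "posterior g A S z =
     (LINT t|lborel. indicator S t * g (z - A t + t)) /
     (LINT t|lborel. g (z - A t + t))"

definition abandon_set :: "(real \<Rightarrow> real) \<Rightarrow> real set" where
  "abandon_set A = {t. A t \<ge> t}"

definition is_equilibrium :: "(real \<Rightarrow> real) \<Rightarrow> real \<Rightarrow> (real \<Rightarrow> real) \<Rightarrow> bool" where
  "is_equilibrium g c A \<longleftrightarrow>
     A \<in> borel_measurable borel \<and>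
     (\<forall>t. 0 \<le> A t \<and> A t \<le> 1) \<and>
     (\<forall>t. A t = (LINT r|lborel.
                   indicator {r. posterior g A (abandon_set A) (A t - t + r) \<ge> c} r * g r))"

end

theory Submission
  imports Defs "HOL-Probability.Probability"
begin

text \<open>
  Every threshold strategy \<open>A\<^sub>k\<close> (attack iff \<open>\<theta> \<le> k\<close>) with \<open>0 \<le> k \<le> 1\<close> is an
  equilibrium. Given a signal \<open>z\<close>,
  the noise would be \<open>z - 1 + \<theta>\<close> for a fundamental \<open>\<theta> \<le> k\<close> and \<open>z + \<theta>\<close> for \<open>\<theta> > k\<close>; as
  the noise is supported in an interval of length \<open>2\<sigma> < 1\<close>, the unit jump of \<open>A\<^sub>k\<close> at \<open>k\<close>
  means that only one of the two regions can have positive posterior weight. So the posterior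
  probability of abandonment is \<open>0\<close> or \<open>1\<close>, and it is \<open>1\<close> iff \<open>G (z + k - 1) > 0\<close>, where \<open>G\<close>
  is the noise distribution function. Since \<open>G(X) > 0\<close> almost surely for any real random
  variable \<open>X\<close> with distribution function \<open>G\<close>, all agents attack when \<open>\<theta> \<le> k\<close>, and none
  does when \<open>\<theta> > k\<close>.
\<close>

lemma (in finite_borel_measure) AE_cdf_pos: "AE x in M. 0 < cdf M x"
proof -
  define T where "T = {x. cdf M x = 0}"
  have down_closed: "y \<in> T" if "y \<le> x" "x \<in> T" for x y
    using that cdf_nondecreasing[of y x] cdf_nonneg[of y] by (simp add: T_def)
  have null_atMost: "{..x} \<in> null_sets M" if "x \<in> T" for x
    using that by (auto simp: T_def cdf_def emeasure_eq_measure intro!: null_setsI)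
  \<comment> \<open>\<open>T\<close> is down-closed, so the null sets \<open>{..q}\<close> for rational \<open>q \<in> T\<close> and for the
      greatest element of \<open>T\<close> (if any) cover it.\<close>
  define I where "I = (T \<inter> \<rat>) \<union> {x \<in> T. \<forall>y\<in>T. y \<le> x}"
  have "countable {x \<in> T. \<forall>y\<in>T. y \<le> x}"
  proof (cases "{x \<in> T. \<forall>y\<in>T. y \<le> x} = {}")
    case False
    then obtain m where "m \<in> T" "\<forall>y\<in>T. y \<le> m" by blast
    then have "{x \<in> T. \<forall>y\<in>T. y \<le> x} \<subseteq> {m}" by force
    then show ?thesis by (rule countable_subset) simp
  qed (simp only: countable_empty)
  then have "countable I"
    unfolding I_def by (blast intro: countable_subset[OF _ countable_rat])
  have "T \<subseteq> (\<Union>q\<in>I. {..q})"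
  proof
    fix x assume "x \<in> T"
    show "x \<in> (\<Union>q\<in>I. {..q})"
    proof (cases "\<forall>y\<in>T. y \<le> x")
      case True
      then show ?thesis using \<open>x \<in> T\<close> by (auto simp: I_def)
    next
      case False
      then obtain y where "y \<in> T" "x < y" by force
      then obtain q where "q \<in> \<rat>" "x < q" "q < y" using Rats_dense_in_real by blast
      then have "q \<in> I" using down_closed[of q y] \<open>y \<in> T\<close> by (simp add: I_def)
      then show ?thesis using \<open>x < q\<close> by (auto intro!: bexI[of _ q])
    qed
  qed
  moreover have "(\<Union>q\<in>I. {..q}) \<in> null_sets M"
    using \<open>countable I\<close> null_atMost by (intro null_sets_UN') (auto simp: I_def)
  ultimately show ?thesis
    by (intro AE_I'[of "\<Union>q\<in>I. {..q}"]) (auto simp: T_def less_le cdf_nonneg)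
qed

definition threshold_attack :: "real \<Rightarrow> real \<Rightarrow> real" where
  "threshold_attack k t = (if t \<le> k then 1 else 0)"

lemma borel_measurable_threshold_attack [measurable]:
  "threshold_attack k \<in> borel_measurable borel"
  unfolding threshold_attack_def by measurable

lemma inj_threshold_attack: "inj threshold_attack"
proof (rule injI)
  fix k l assume "threshold_attack k = threshold_attack l"
  then have "threshold_attack k k = threshold_attack l k" "threshold_attack k l = threshold_attack l l"
    by simp_all
  then show "k = l" by (auto simp: threshold_attack_def split: if_splits)
qed

lemma abandon_set_threshold_attack:
  "0 \<le> k \<Longrightarrow> k \<le> 1 \<Longrightarrow> abandon_set (threshold_attack k) = {..k}"
  by (auto simp: abandon_set_def threshold_attack_def)

locale bounded_noise_game =
  fixes g :: "real \<Rightarrow> real" and c \<sigma> :: real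
  assumes c_pos: "0 < c" and c_le1: "c \<le> 1"
    and g_meas [measurable]: "g \<in> borel_measurable borel"
    and g_nonneg: "\<And>r. 0 \<le> g r"
    and g_int: "integrable lborel g"
    and g_total: "(LINT r|lborel. g r) = 1"
    and sigma_lt: "\<sigma> < 1/2"
    and g_supp: "\<And>r. r \<notin> {-\<sigma>..\<sigma>} \<Longrightarrow> g r = 0"
begin

definition noise :: "real measure" where
  "noise = density lborel (\<lambda>x. ennreal (g x))"

lemma sets_noise [simp, measurable_cong]: "sets noise = sets borel"
  by (simp add: noise_def)

lemma space_noise [simp]: "space noise = UNIV"
  by (simp add: noise_def)

lemma measure_noise:
  assumes "S \<in> sets borel"
  shows "measure noise S = (LINT x|lborel. indicator S x * g x)"
proof -
  have "measure noise S = (LINT x|noise. indicator S x)" by simp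
  also have "\<dots> = (LINT x|lborel. g x *\<^sub>R indicator S x)"
    unfolding noise_def using assms g_nonneg by (intro integral_density) auto
  finally show ?thesis by (simp add: mult.commute)
qed

sublocale noise: real_distribution noise
proof -
  have "emeasure noise UNIV = ennreal (LINT x|lborel. g x)"
    unfolding noise_def using g_int g_nonneg
    by (simp add: emeasure_density nn_integral_eq_integral)
  then have "prob_space noise" using g_total by (intro prob_spaceI) (simp add: noise_def)
  then show "real_distribution noise" by (simp add: real_distribution_def real_distribution_axioms_def)
qed

lemma cdf_noise: "cdf noise x = (LINT s|lborel. indicator {..x} s * g s)"
  by (simp add: cdf_def measure_noise)

lemma cdf_noise_eq_0: "x < -\<sigma> \<Longrightarrow> cdf noise x = 0"
proof -
  assume "x < -\<sigma>"
  then have "(\<lambda>s. indicator {..x} s * g s) = (\<lambda>s. 0::real)"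
    using g_supp by (force simp: indicator_def)
  then show ?thesis by (simp add: cdf_noise)
qed

lemma noise_support_gap:
  assumes "g (z - 1 + t1) \<noteq> 0" "g (z + t2) \<noteq> 0"
  shows "t2 < t1"
proof -
  have "-\<sigma> \<le> z - 1 + t1" "z + t2 \<le> \<sigma>" using assms g_supp by force+
  then show ?thesis using sigma_lt by linarith
qed

lemma posterior_threshold_attack:
  assumes "0 \<le> k" "k \<le> 1"
  shows "posterior g (threshold_attack k) (abandon_set (threshold_attack k)) z
           = (if cdf noise (z + k - 1) = 0 then 0 else 1)"
proof -
  let ?A = "threshold_attack k"
  define N where "N = (LINT t|lborel. indicator {..k} t * g (z - 1 + t))"
  have posterior_eq: "posterior g ?A (abandon_set ?A) z = N / (LINT t|lborel. g (z - ?A t + t))"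
    unfolding posterior_def abandon_set_threshold_attack[OF assms] N_def
    by (intro arg_cong2[where f = "(/)"] Bochner_Integration.integral_cong)
       (auto simp: threshold_attack_def indicator_def)
  have "cdf noise (z + k - 1) = N"
    unfolding cdf_noise N_def
    using lborel_integral_real_affine[of 1 "\<lambda>s. indicator {..z + k - 1} s * g s" "z - 1"]
    by (simp add: indicator_def algebra_simps)
  moreover have "(LINT t|lborel. g (z - ?A t + t)) = N" if "N \<noteq> 0"
  proof -
    obtain t1 where "t1 \<le> k" "g (z - 1 + t1) \<noteq> 0"
    proof (rule ccontr)
      assume "\<not> thesis"
      with that have "(\<lambda>t. indicator {..k} t * g (z - 1 + t)) = (\<lambda>t. 0)"
        by (auto simp: indicator_def fun_eq_iff)
      with \<open>N \<noteq> 0\<close> show False unfolding N_def by simp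
    qed
    then have "g (z + t) = 0" if "k < t" for t
      using noise_support_gap[of z t1 t] that by fastforce
    then show ?thesis
      unfolding N_def
      by (intro Bochner_Integration.integral_cong) (auto simp: threshold_attack_def indicator_def)
  qed
  ultimately show ?thesis using posterior_eq by simp
qed

lemma integral_cdf_noise_shift_nonzero_eq_1:
  assumes "0 \<le> a"
  shows "(LINT r|lborel. indicator {r. cdf noise (a + r) \<noteq> 0} r * g r) = 1"
proof -
  have [measurable]: "cdf noise \<in> borel_measurable borel"
    by (intro borel_measurable_mono) (auto simp: mono_def intro: noise.cdf_nondecreasing)
  have "AE r in noise. cdf noise (a + r) \<noteq> 0"
    using noise.AE_cdf_pos
  proof eventually_elim
    case (elim r)
    then show ?case using noise.cdf_nondecreasing[of r "a + r"] assms by simp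
  qed
  then have "measure noise {r. cdf noise (a + r) \<noteq> 0} = 1"
    using noise.prob_Collect_eq_1[of "\<lambda>r. cdf noise (a + r) \<noteq> 0"] by simp
  then show ?thesis by (simp add: measure_noise)
qed

lemma integral_cdf_noise_shift_nonzero_eq_0:
  assumes "a < -2 * \<sigma>"
  shows "(LINT r|lborel. indicator {r. cdf noise (a + r) \<noteq> 0} r * g r) = 0"
proof -
  have "cdf noise (a + r) = 0" if "g r \<noteq> 0" for r
    using that g_supp[of r] assms by (intro cdf_noise_eq_0) force
  then have "(\<lambda>r. indicator {r. cdf noise (a + r) \<noteq> 0} r * g r) = (\<lambda>r. 0)"
    by (force simp: indicator_def)
  then show ?thesis by simp
qed

lemma threshold_attack_is_equilibrium:
  assumes k: "0 \<le> k" "k \<le> 1"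
  shows "is_equilibrium g c (threshold_attack k)"
  unfolding is_equilibrium_def
proof (intro conjI allI)
  fix \<theta>
  let ?A = "threshold_attack k"
  have response: "{r. c \<le> posterior g ?A (abandon_set ?A) (?A \<theta> - \<theta> + r)}
      = {r. cdf noise ((?A \<theta> + k - \<theta> - 1) + r) \<noteq> 0}"
    using c_pos c_le1 by (simp add: posterior_threshold_attack[OF k] algebra_simps)
  show "?A \<theta> = (LINT r|lborel.
          indicator {r. c \<le> posterior g ?A (abandon_set ?A) (?A \<theta> - \<theta> + r)} r * g r)"
  proof (cases "\<theta> \<le> k")
    case True
    then have shift: "?A \<theta> + k - \<theta> - 1 = k - \<theta>" by (simp add: threshold_attack_def)
    show ?thesis
      unfolding response shift
      using True integral_cdf_noise_shift_nonzero_eq_1[of "k - \<theta>"] by (simp add: threshold_attack_def)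
  next
    case False
    then have shift: "?A \<theta> + k - \<theta> - 1 = k - \<theta> - 1" by (simp add: threshold_attack_def)
    have "k - \<theta> - 1 < -2 * \<sigma>" using False sigma_lt by linarith
    then show ?thesis
      unfolding response shift
      using False integral_cdf_noise_shift_nonzero_eq_0 by (simp add: threshold_attack_def)
  qed
qed (auto simp: threshold_attack_def)

end

theorem proposition3:
  fixes g :: "real \<Rightarrow> real" and c \<sigma> :: real
  assumes c_pos: "0 < c" and c_lt1: "c < 1"
    and g_meas: "g \<in> borel_measurable borel"
    and g_nonneg: "\<And>r. 0 \<le> g r"
    and g_int: "integrable lborel g"
    and g_total: "(LINT r|lborel. g r) = 1"
    and sigma_pos: "0 < \<sigma>" and sigma_lt: "\<sigma> < 1/2"
    and g_supp: "\<And>r. r \<notin> {-\<sigma>..\<sigma>} \<Longrightarrow> g r = 0"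
  shows "uncountable {A. is_equilibrium g c A}"
proof -
  interpret bounded_noise_game g c \<sigma>
    using assms by unfold_locales simp_all
  have "threshold_attack ` {0..1} \<subseteq> {A. is_equilibrium g c A}"
    using threshold_attack_is_equilibrium by auto
  moreover have "uncountable (threshold_attack ` {0..1})"
    using uncountable_closed_interval[of 0 1] countable_image_inj_on[of threshold_attack "{0..1}"]
      inj_on_subset[OF inj_threshold_attack]
    by auto
  ultimately show ?thesis using countable_subset by blast
qed

end
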